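(* Let $p\in(2,5)$ and let $u \in \dot H^1(\mathbb R^3)\cap L^p(\mathbb R^3)$ be a radial, positive, radially decreasing solution of $$-\Delta u + u^{p-1} = I(u^p)\,u^{p-1}\quad\text{in }\mathbb R^3.$$ Then there exist $r_0>0$ and $C>0$ such that $$u(r) \le \frac{C}{r^{2/(p-2)}}\qquad \text{for all } r>r_0,$$ where $u(r)$ denotes the value of $u$ at $|x|=r$.
   Context: For $f$ on $\mathbb R^3$, the Riesz potential is $I(f)(x) = \frac{1}{4\pi}\int_{\mathbb R^3} \frac{f(y)}{|x-y|}\,dy$. *)

theory Defs
  imports "HOL-Analysis.Analysis"
begin

type_synonym R3 = "real ^ 3"

definition dpart :: "3 \<Rightarrow> (R3 \<Rightarrow> real) \<Rightarrow> R3 \<Rightarrow> real" where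
  "dpart i f x = deriv (\<lambda>t. f (x + t *\<^sub>R axis i 1)) 0"

fun iter_partial :: "3 list \<Rightarrow> (R3 \<Rightarrow> real) \<Rightarrow> R3 \<Rightarrow> real" where
  "iter_partial [] f = f"
| "iter_partial (i # is) f = dpart i (iter_partial is f)"

definition smooth3 :: "(R3 \<Rightarrow> real) \<Rightarrow> bool" where
  "smooth3 f \<longleftrightarrow> (\<forall>is. continuous_on UNIV (iter_partial is f) \<and>
      (\<forall>x i. (\<lambda>t. iter_partial is f (x + t *\<^sub>R axis i 1)) differentiable (at 0)))"

definition test_fun :: "(R3 \<Rightarrow> real) \<Rightarrow> bool" where
  "test_fun \<phi> \<longleftrightarrow> smooth3 \<phi> \<and> compact (closure {x. \<phi> x \<noteq> 0})"

definition riesz :: "(R3 \<Rightarrow> real) \<Rightarrow> R3 \<Rightarrow> real" where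
  "riesz f x = (1 / (4 * pi)) * (LINT y|lborel. f y / dist x y)"

definition weak_gradient :: "(R3 \<Rightarrow> real) \<Rightarrow> (R3 \<Rightarrow> R3) \<Rightarrow> bool" where
  "weak_gradient u G \<longleftrightarrow>
     (\<forall>i. (\<lambda>x. G x $ i) \<in> borel_measurable lborel) \<and>
     (\<forall>K. compact K \<longrightarrow> set_integrable lborel K u \<and>
            (\<forall>i. set_integrable lborel K (\<lambda>x. G x $ i))) \<and>
     (\<forall>\<phi> i. test_fun \<phi> \<longrightarrow>
        (LINT x|lborel. u x * dpart i \<phi> x) = - (LINT x|lborel. G x $ i * \<phi> x))"

definition in_dotH1 :: "(R3 \<Rightarrow> real) \<Rightarrow> bool" where
  "in_dotH1 u \<longleftrightarrow> u \<in> borel_measurable lborel \<and>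
     (\<exists>G. weak_gradient u G \<and> integrable lborel (\<lambda>x. (norm (G x))\<^sup>2))"

definition in_Lp :: "real \<Rightarrow> (R3 \<Rightarrow> real) \<Rightarrow> bool" where
  "in_Lp p u \<longleftrightarrow> u \<in> borel_measurable lborel \<and> integrable lborel (\<lambda>x. \<bar>u x\<bar> powr p)"

definition weak_solution :: "real \<Rightarrow> (R3 \<Rightarrow> real) \<Rightarrow> bool" where
  "weak_solution p u \<longleftrightarrow>
     (\<exists>G. weak_gradient u G \<and> integrable lborel (\<lambda>x. (norm (G x))\<^sup>2) \<and>
       (AE x in lborel. integrable lborel (\<lambda>y. u y powr p / dist x y)) \<and>
       (\<forall>\<phi>. test_fun \<phi> \<longrightarrow>
          integrable lborel (\<lambda>x. riesz (\<lambda>y. u y powr p) x * u x powr (p - 1) * \<phi> x) \<and>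
          (LINT x|lborel. (\<Sum>i\<in>UNIV. G x $ i * dpart i \<phi> x) + u x powr (p - 1) * \<phi> x)
          = (LINT x|lborel. riesz (\<lambda>y. u y powr p) x * u x powr (p - 1) * \<phi> x)))"

end

theory Submission
  imports Defs "HOL-Computational_Algebra.Polynomial"
begin

text \<open>
  Test the weak equation against phi_r(x) = psi(x/r), a smooth bump supported in the annulus
  r <= |x| <= 4r. Since u is radially decreasing with u^p integrable, I(u^p)(x) = O(1/|x|), so
  I(u^p) <= 1/2 on the support of phi_r once r is large; moving the weak gradient onto phi_r
  then gives (1/2) int u^(p-1) phi_r <= int u (Delta phi_r). By the monotonicity of u the left
  side is at least c r^3 u(3r)^(p-1) and the right side at most C r u(r), so
  u(3r)^(p-1) <= K u(r) / r^2. Along r = 3^n r_1 this recurrence keeps u(r) r^(2/(p-2)) bounded.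
\<close>

section \<open>The function exp(-1/t)\<close>

text \<open>expinv k is the k-th derivative of exp(-1/t) on t > 0 (and 0 for t <= 0):
  differentiating q(1/t) exp(-1/t) gives (X^2 (q - q'))(1/t) exp(-1/t).\<close>

primrec expinv_poly :: "nat \<Rightarrow> real poly" where
  "expinv_poly 0 = 1"
| "expinv_poly (Suc k) = [:0, 0, 1:] * (expinv_poly k - pderiv (expinv_poly k))"

definition expinv :: "nat \<Rightarrow> real \<Rightarrow> real" where
  "expinv k t = (if 0 < t then poly (expinv_poly k) (1 / t) * exp (- (1 / t)) else 0)"

lemma poly_times_exp_neg_tendsto_0: "((\<lambda>y. poly q y * exp (- y)) \<longlongrightarrow> (0::real)) at_top"
proof -
  have "((\<lambda>y. \<Sum>i\<le>degree q. coeff q i * (y ^ i / exp y)) \<longlongrightarrow> (\<Sum>i\<le>degree q. coeff q i * 0)) at_top"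
    by (intro tendsto_sum tendsto_mult tendsto_const tendsto_power_div_exp_0)
  moreover have "(\<lambda>y. \<Sum>i\<le>degree q. coeff q i * (y ^ i / exp y)) = (\<lambda>y. poly q y * exp (- y))"
    by (auto simp: poly_altdef sum_divide_distrib exp_minus field_simps)
  ultimately show ?thesis by simp
qed

lemma expinv_has_derivative_pos:
  assumes "0 < t"
  shows "(expinv k has_real_derivative expinv (Suc k) t) (at t)"
proof -
  have "((\<lambda>t. poly (expinv_poly k) (1/t) * exp (-(1/t))) has_real_derivative
      (poly (pderiv (expinv_poly k)) (1/t) * (- 1 / t^2) * exp (-(1/t))
        + poly (expinv_poly k) (1/t) * (exp (-(1/t)) * (1/t^2)))) (at t)"
    using assms
    by (auto intro!: derivative_eq_intros DERIV_chain2[OF poly_DERIV] simp: power2_eq_square field_simps)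
  also have "poly (pderiv (expinv_poly k)) (1/t) * (- 1 / t^2) * exp (-(1/t))
        + poly (expinv_poly k) (1/t) * (exp (-(1/t)) * (1/t^2)) = expinv (Suc k) t"
    using assms by (simp add: expinv_def algebra_simps power2_eq_square)
  finally show ?thesis
    by (rule has_field_derivative_transform_within_open[where S="{0<..}"]) (use assms in \<open>auto simp: expinv_def\<close>)
qed

lemma expinv_has_derivative_neg:
  assumes "t < 0"
  shows "(expinv k has_real_derivative expinv (Suc k) t) (at t)"
proof -
  have "((\<lambda>_. 0) has_real_derivative 0) (at t)" by simp
  then have "(expinv k has_real_derivative 0) (at t)"
    by (rule has_field_derivative_transform_within_open[where S="{..<0}"]) (use assms in \<open>auto simp: expinv_def\<close>)
  then show ?thesis using assms by (simp add: expinv_def)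
qed

lemma expinv_has_derivative_0: "(expinv k has_real_derivative expinv (Suc k) 0) (at 0)"
proof -
  have "((\<lambda>y. (expinv k y - expinv k 0) / (y - 0)) \<longlongrightarrow> 0) (at 0)"
  proof (rule filterlim_split_at)
    show "((\<lambda>y. (expinv k y - expinv k 0) / (y - 0)) \<longlongrightarrow> 0) (at_left 0)"
      by (rule tendsto_eventually) (auto simp: expinv_def eventually_at_left_field intro: exI[of _ "-1"])
    have "((\<lambda>y. poly (expinv_poly k * [:0, 1:]) y * exp (- y)) \<longlongrightarrow> 0) at_top"
      by (rule poly_times_exp_neg_tendsto_0)
    then have "((\<lambda>y. (expinv k (inverse y) - expinv k 0) / (inverse y - 0)) \<longlongrightarrow> 0) at_top"
      by (rule Lim_transform_eventually)
         (use eventually_gt_at_top[of "0::real"] in \<open>eventually_elim, auto simp: expinv_def field_simps\<close>)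
    then show "((\<lambda>y. (expinv k y - expinv k 0) / (y - 0)) \<longlongrightarrow> 0) (at_right 0)"
      by (simp add: filterlim_at_right_to_0 at_right_to_top filterlim_at_top_to_right)
  qed
  then show ?thesis by (simp add: has_field_derivative_iff expinv_def)
qed

lemma expinv_has_real_derivative: "(expinv k has_real_derivative expinv (Suc k) t) (at t)"
  using expinv_has_derivative_pos expinv_has_derivative_neg expinv_has_derivative_0
  by (cases "t < 0"; cases "t = 0") auto

lemma continuous_on_expinv: "continuous_on UNIV (expinv k)"
  using DERIV_isCont[OF expinv_has_real_derivative] by (simp add: continuous_at_imp_continuous_on)

lemma expinv_0_nonneg: "0 \<le> expinv 0 t"
  by (simp add: expinv_def)

lemma expinv_0_pos: "0 < t \<Longrightarrow> 0 < expinv 0 t"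
  by (simp add: expinv_def)

lemma expinv_nonpos: "t \<le> 0 \<Longrightarrow> expinv k t = 0"
  by (simp add: expinv_def)

lemma expinv_0_mono: "0 < a \<Longrightarrow> a \<le> b \<Longrightarrow> expinv 0 a \<le> expinv 0 b"
  by (simp add: expinv_def frac_le)

section \<open>An algebra of smooth functions\<close>

inductive_set bump_algebra :: "(R3 \<Rightarrow> real) set" where
  const: "(\<lambda>x. c) \<in> bump_algebra"
| coord: "(\<lambda>x. x $ j) \<in> bump_algebra"
| expinv_quadratic: "(\<lambda>x. expinv k (a + b * (x \<bullet> x))) \<in> bump_algebra"
| add: "f \<in> bump_algebra \<Longrightarrow> g \<in> bump_algebra \<Longrightarrow> (\<lambda>x. f x + g x) \<in> bump_algebra"
| mult: "f \<in> bump_algebra \<Longrightarrow> g \<in> bump_algebra \<Longrightarrow> (\<lambda>x. f x * g x) \<in> bump_algebra"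

lemma bump_algebra_sum:
  "(\<And>i. i \<in> I \<Longrightarrow> f i \<in> bump_algebra) \<Longrightarrow> (\<lambda>x. \<Sum>i\<in>I. f i x) \<in> bump_algebra"
  by (induction I rule: infinite_finite_induct) (auto intro: bump_algebra.intros)

lemma bump_algebra_continuous: "f \<in> bump_algebra \<Longrightarrow> continuous_on UNIV f"
proof (induction rule: bump_algebra.induct)
  case (expinv_quadratic k a b)
  show ?case
    by (rule continuous_on_compose2[OF continuous_on_expinv]) (auto intro!: continuous_intros)
qed (auto intro!: continuous_intros)

lemma bump_algebra_measurable: "f \<in> bump_algebra \<Longrightarrow> f \<in> borel_measurable lborel"
  using borel_measurable_continuous_onI[OF bump_algebra_continuous] by simp

lemma inner_add_axis:
  fixes x :: R3
  shows "(x + t *\<^sub>R axis i 1) \<bullet> (x + t *\<^sub>R axis i 1) = x \<bullet> x + 2 * t * x $ i + t\<^sup>2"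
  by (simp add: inner_add_left inner_add_right inner_axis inner_axis' power2_eq_square algebra_simps)

lemma bump_algebra_directional_deriv:
  "f \<in> bump_algebra \<Longrightarrow>
    \<exists>f'\<in>bump_algebra. \<forall>x. ((\<lambda>t. f (x + t *\<^sub>R axis i 1)) has_real_derivative f' x) (at 0)"
proof (induction rule: bump_algebra.induct)
  case (const c)
  show ?case by (rule bexI[of _ "\<lambda>x. 0"]) (auto intro: bump_algebra.intros)
next
  case (coord j)
  show ?case
    by (rule bexI[of _ "\<lambda>x. if i = j then 1 else 0"])
       (auto intro!: derivative_eq_intros bump_algebra.intros simp: axis_def)
next
  case (expinv_quadratic k a b)
  show ?case
  proof (rule bexI[of _ "\<lambda>x. expinv (Suc k) (a + b * (x \<bullet> x)) * (2 * b * x $ i)"], intro allI)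
    fix x :: R3
    have "((\<lambda>t. expinv k (a + b * (x \<bullet> x + 2 * t * x $ i + t\<^sup>2))) has_real_derivative
           expinv (Suc k) (a + b * (x \<bullet> x + 2 * 0 * x $ i + 0\<^sup>2)) * (b * (2 * x $ i + 2 * 0))) (at 0)"
      by (rule DERIV_chain2[OF expinv_has_real_derivative]) (auto intro!: derivative_eq_intros)
    then show "((\<lambda>t. expinv k (a + b * ((x + t *\<^sub>R axis i 1) \<bullet> (x + t *\<^sub>R axis i 1)))) has_real_derivative
           expinv (Suc k) (a + b * (x \<bullet> x)) * (2 * b * x $ i)) (at 0)"
      by (simp only: inner_add_axis) (simp add: algebra_simps)
  qed (auto intro!: bump_algebra.intros)
next
  case (add f g)
  then obtain f' g' where "f' \<in> bump_algebra" "g' \<in> bump_algebra"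
    and "\<forall>x. ((\<lambda>t. f (x + t *\<^sub>R axis i 1)) has_real_derivative f' x) (at 0)"
    and "\<forall>x. ((\<lambda>t. g (x + t *\<^sub>R axis i 1)) has_real_derivative g' x) (at 0)"
    by blast
  then show ?case
    by (intro bexI[of _ "\<lambda>x. f' x + g' x"]) (auto intro!: derivative_eq_intros bump_algebra.intros)
next
  case (mult f g)
  then obtain f' g' where "f' \<in> bump_algebra" "g' \<in> bump_algebra"
    and df: "\<forall>x. ((\<lambda>t. f (x + t *\<^sub>R axis i 1)) has_real_derivative f' x) (at 0)"
    and dg: "\<forall>x. ((\<lambda>t. g (x + t *\<^sub>R axis i 1)) has_real_derivative g' x) (at 0)"
    by blast
  show ?case
  proof (intro bexI[of _ "\<lambda>x. f' x * g x + f x * g' x"] allI)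
    fix x
    show "((\<lambda>t. f (x + t *\<^sub>R axis i 1) * g (x + t *\<^sub>R axis i 1))
        has_real_derivative f' x * g x + f x * g' x) (at 0)"
      using DERIV_mult[OF df[rule_format, of x] dg[rule_format, of x]] by (simp add: ac_simps)
  qed (auto intro!: bump_algebra.intros \<open>f' \<in> bump_algebra\<close> \<open>g' \<in> bump_algebra\<close> mult)
qed

lemma
  assumes "f \<in> bump_algebra"
  shows dpart_in_bump_algebra: "dpart i f \<in> bump_algebra"
    and has_real_derivative_dpart: "((\<lambda>t. f (x + t *\<^sub>R axis i 1)) has_real_derivative dpart i f x) (at 0)"
proof -
  obtain f' where f': "f' \<in> bump_algebra"
    "\<And>x. ((\<lambda>t. f (x + t *\<^sub>R axis i 1)) has_real_derivative f' x) (at 0)"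
    using bump_algebra_directional_deriv[OF assms, of i] by blast
  have "dpart i f = f'"
    by (rule ext) (simp add: dpart_def DERIV_imp_deriv f'(2))
  with f' show "dpart i f \<in> bump_algebra"
    and "((\<lambda>t. f (x + t *\<^sub>R axis i 1)) has_real_derivative dpart i f x) (at 0)"
    by auto
qed

lemma iter_partial_in_bump_algebra: "f \<in> bump_algebra \<Longrightarrow> iter_partial js f \<in> bump_algebra"
  by (induction js) (auto intro: dpart_in_bump_algebra)

lemma bump_algebra_smooth3: "f \<in> bump_algebra \<Longrightarrow> smooth3 f"
  unfolding smooth3_def real_differentiable_def
  using bump_algebra_continuous iter_partial_in_bump_algebra has_real_derivative_dpart by blast

lemma bump_algebra_scaleR: "f \<in> bump_algebra \<Longrightarrow> (\<lambda>x. f (s *\<^sub>R x)) \<in> bump_algebra"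
proof (induction rule: bump_algebra.induct)
  case (coord j)
  have "(\<lambda>x::R3. s * x $ j) \<in> bump_algebra" by (intro bump_algebra.intros)
  then show ?case by simp
next
  case (expinv_quadratic k a b)
  have "(\<lambda>x::R3. expinv k (a + (b * s\<^sup>2) * (x \<bullet> x))) \<in> bump_algebra"
    by (rule bump_algebra.expinv_quadratic)
  then show ?case by (simp add: power2_eq_square algebra_simps)
qed (auto intro: bump_algebra.intros)

lemma dpart_scaleR:
  assumes "f \<in> bump_algebra"
  shows "dpart i (\<lambda>x. f (s *\<^sub>R x)) x = s * dpart i f (s *\<^sub>R x)"
proof -
  have "((\<lambda>t. f (s *\<^sub>R x + (s * t) *\<^sub>R axis i 1)) has_real_derivative dpart i f (s *\<^sub>R x) * s) (at 0)"
    using DERIV_chain2[of "\<lambda>t. f (s *\<^sub>R x + t *\<^sub>R axis i 1)" "dpart i f (s *\<^sub>R x)" "\<lambda>t. s * t" 0 s]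
      has_real_derivative_dpart[OF assms, where i=i and x="s *\<^sub>R x"]
    by (auto intro!: derivative_eq_intros)
  then have "((\<lambda>t. f (s *\<^sub>R (x + t *\<^sub>R axis i 1))) has_real_derivative dpart i f (s *\<^sub>R x) * s) (at 0)"
    by (simp add: scaleR_add_right)
  then show ?thesis
    by (simp add: dpart_def DERIV_imp_deriv mult.commute)
qed

lemma dpart_cmult:
  assumes "f \<in> bump_algebra"
  shows "dpart i (\<lambda>x. c * f x) x = c * dpart i f x"
  unfolding dpart_def
  by (rule DERIV_imp_deriv, rule DERIV_cmult)
     (rule has_real_derivative_dpart[OF assms, unfolded dpart_def])

lemma dpart_eq_0_open:
  assumes "open W" "y \<in> W" "\<And>x. x \<in> W \<Longrightarrow> f x = 0"
  shows "dpart i f y = 0"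
proof -
  obtain e where e: "e > 0" "ball y e \<subseteq> W"
    using assms(1,2) open_contains_ball by blast
  have "eventually (\<lambda>t. y + t *\<^sub>R axis i 1 \<in> W) (nhds 0)"
    unfolding eventually_nhds_metric
    by (rule exI[of _ e]) (use e in \<open>auto simp: dist_norm\<close>)
  then have "eventually (\<lambda>t. f (y + t *\<^sub>R axis i 1) = 0) (nhds 0)"
    by eventually_elim (use assms(3) in auto)
  then have "deriv (\<lambda>t. f (y + t *\<^sub>R axis i 1)) 0 = deriv (\<lambda>_. 0) 0"
    by (rule deriv_cong_ev) simp
  then show ?thesis by (simp add: dpart_def)
qed

section \<open>Integrals over R^3\<close>

lemma bounded_compact_support:
  fixes f :: "'a::metric_space \<Rightarrow> real"
  assumes "continuous_on UNIV f" "compact K" "\<And>x. x \<notin> K \<Longrightarrow> f x = 0"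
  obtains M where "\<And>x. \<bar>f x\<bar> \<le> M"
proof -
  have "compact (f ` K)"
    using assms(1,2) by (intro compact_continuous_image) (auto intro: continuous_on_subset)
  then obtain M where "\<And>y. y \<in> f ` K \<Longrightarrow> norm y \<le> M"
    using compact_imp_bounded bounded_iff by metis
  then have "\<bar>f x\<bar> \<le> max 0 M" for x
    using assms(3) by (cases "x \<in> K") force+
  then show ?thesis using that by blast
qed

lemma integrable_bounded_compact_support:
  fixes f :: "'a::euclidean_space \<Rightarrow> real"
  assumes "f \<in> borel_measurable lborel" "compact K" "\<And>x. x \<notin> K \<Longrightarrow> f x = 0" "\<And>x. \<bar>f x\<bar> \<le> M"
  shows "integrable lborel f"
proof (rule Bochner_Integration.integrable_bound)
  show "integrable lborel (\<lambda>x. indicator K x *\<^sub>R M)"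
    using assms(2) by (intro borel_integrable_compact) auto
  show "AE x in lborel. norm (f x) \<le> norm (indicator K x *\<^sub>R M)"
    using assms(3,4) by (intro AE_I2) (auto simp: indicator_def intro: order_trans[OF _ abs_ge_self])
qed (rule assms(1))

lemma integrable_mult_compact_support:
  fixes f h :: "'a::euclidean_space \<Rightarrow> real"
  assumes h: "set_integrable lborel K h" and f: "f \<in> borel_measurable lborel"
    and vanish: "\<And>x. x \<notin> K \<Longrightarrow> f x = 0" and bound: "\<And>x. \<bar>f x\<bar> \<le> M"
  shows "integrable lborel (\<lambda>x. h x * f x)"
proof -
  have hK: "integrable lborel (\<lambda>x. indicator K x *\<^sub>R h x)"
    using h by (simp add: set_integrable_def)
  have "integrable lborel (\<lambda>x. (indicator K x *\<^sub>R h x) * f x)"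
  proof (rule Bochner_Integration.integrable_bound)
    show "integrable lborel (\<lambda>x. M * (indicator K x *\<^sub>R h x))"
      using hK by simp
    show "(\<lambda>x. (indicator K x *\<^sub>R h x) * f x) \<in> borel_measurable lborel"
      using hK f by (intro borel_measurable_times) auto
    show "AE x in lborel. norm ((indicator K x *\<^sub>R h x) * f x) \<le> norm (M * (indicator K x *\<^sub>R h x))"
    proof (intro AE_I2)
      fix x
      have "\<bar>f x\<bar> \<le> \<bar>M\<bar>" using bound[of x] by linarith
      then show "norm ((indicator K x *\<^sub>R h x) * f x) \<le> norm (M * (indicator K x *\<^sub>R h x))"
        by (simp add: abs_mult mult.commute mult_right_mono)
    qed
  qed
  moreover have "(\<lambda>x. (indicator K x *\<^sub>R h x) * f x) = (\<lambda>x. h x * f x)"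
    using vanish by (force simp: indicator_def)
  ultimately show ?thesis by simp
qed

lemma emeasure_cball_R3: "0 \<le> r \<Longrightarrow> emeasure lborel (cball (c::R3) r) = ennreal (4 / 3 * pi * r ^ 3)"
  by (simp add: emeasure_cball unit_ball_vol_3)

lemma ex_power_bracket:
  fixes b z :: real
  assumes "1 < b" "1 \<le> z"
  obtains k :: nat where "b ^ k \<le> z" "z < b ^ (k + 1)"
proof -
  define k where "k = nat \<lfloor>log b z\<rfloor>"
  have "real k = \<lfloor>log b z\<rfloor>"
    using assms by (simp add: k_def)
  moreover have "b powr \<lfloor>log b z\<rfloor> \<le> z \<and> z < b powr (\<lfloor>log b z\<rfloor> + 1)"
    using floor_log_eq_powr_iff[of z b "\<lfloor>log b z\<rfloor>"] assms by simp
  ultimately have "b powr real k \<le> z \<and> z < b powr (real k + 1)"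
    by simp
  then show ?thesis
    using assms by (intro that[of k]) (simp_all add: powr_add powr_realpow mult.commute)
qed

lemma nn_integral_inverse_dist_ball_le:
  fixes x :: R3
  assumes "0 < \<rho>"
  shows "(\<integral>\<^sup>+y. ennreal (indicator (ball x \<rho>) y / dist x y) \<partial>lborel) \<le> ennreal (32 / 9 * pi * \<rho>\<^sup>2)"
proof -
  \<comment> \<open>dominate 1 / dist x y by g k y for the k with 2^k \<le> \<rho> / dist x y < 2^(k+1)\<close>
  define g where "g k y = ennreal (2 ^ (k + 1) / \<rho>) * indicator (cball x (\<rho> / 2 ^ k)) y"
    for k :: nat and y :: R3
  have "ennreal (indicator (ball x \<rho>) y / dist x y) \<le> (\<Sum>k. g k y)" for y
  proof (cases "y \<in> ball x \<rho> \<and> y \<noteq> x")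
    case True
    define d where "d = dist x y"
    have d: "0 < d" "d < \<rho>" using True by (auto simp: d_def)
    obtain k :: nat where k: "2 ^ k \<le> \<rho> / d" "\<rho> / d < 2 ^ (k + 1)"
      using ex_power_bracket[of 2 "\<rho> / d"] d by auto
    have "y \<in> cball x (\<rho> / 2 ^ k)" "1 / d \<le> 2 ^ (k + 1) / \<rho>"
      using k d assms by (auto simp: d_def field_simps)
    then have "ennreal (indicator (ball x \<rho>) y / dist x y) \<le> g k y"
      using True by (simp add: g_def d_def[symmetric] ennreal_leI)
    also have "\<dots> \<le> (\<Sum>k. g k y)"
      using sum_le_suminf[of "\<lambda>k. g k y" "{k}"] by simp
    finally show ?thesis .
  qed auto
  then have "(\<integral>\<^sup>+y. ennreal (indicator (ball x \<rho>) y / dist x y) \<partial>lborel) \<le> (\<integral>\<^sup>+y. (\<Sum>k. g k y) \<partial>lborel)"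
    by (intro nn_integral_mono)
  also have "\<dots> = (\<Sum>k. \<integral>\<^sup>+y. g k y \<partial>lborel)"
    by (rule nn_integral_suminf) (auto simp: g_def intro!: borel_measurable_times_ennreal borel_measurable_indicator)
  also have "\<dots> = (\<Sum>k. ennreal (8 / 3 * pi * \<rho>\<^sup>2 * (1 / 4) ^ k))"
  proof (rule suminf_cong)
    fix k
    have "(2::real) ^ (k + 1) / \<rho> * (4 / 3 * pi * (\<rho> / 2 ^ k) ^ 3) = 8 / 3 * pi * \<rho>\<^sup>2 * (1 / 4) ^ k"
      using assms
      by (simp add: field_simps power2_eq_square power3_eq_cube power_divide
          flip: power_mult_distrib power_add)
    then show "(\<integral>\<^sup>+y. g k y \<partial>lborel) = ennreal (8 / 3 * pi * \<rho>\<^sup>2 * (1 / 4) ^ k)"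
      using assms unfolding g_def
      by (simp add: nn_integral_cmult_indicator emeasure_cball_R3 flip: ennreal_mult)
  qed
  also have "\<dots> = ennreal (32 / 9 * pi * \<rho>\<^sup>2)"
  proof (rule suminf_ennreal_eq)
    have "(\<lambda>k. (1 / 4 :: real) ^ k) sums (4 / 3)"
      using geometric_sums[of "1 / 4 :: real"] by simp
    from sums_mult[OF this, of "8 / 3 * pi * \<rho>\<^sup>2"]
    show "(\<lambda>k. 8 / 3 * pi * \<rho>\<^sup>2 * (1 / 4) ^ k) sums (32 / 9 * pi * \<rho>\<^sup>2)"
      by (simp add: mult.assoc)
  qed simp
  finally show ?thesis .
qed

lemma nn_integral_div_dist_le:
  fixes g :: "R3 \<Rightarrow> real" and x :: R3
  assumes g: "integrable lborel g" "\<And>y. 0 \<le> g y" and \<rho>: "0 < \<rho>"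
    and near: "\<And>y. dist x y < \<rho> \<Longrightarrow> g y \<le> M"
  shows "(\<integral>\<^sup>+y. ennreal (g y / dist x y) \<partial>lborel)
    \<le> ennreal (integral\<^sup>L lborel g / \<rho> + M * (32 / 9 * pi * \<rho>\<^sup>2))"
proof -
  have M: "0 \<le> M"
    using near[of x] g(2)[of x] \<rho> by simp
  have [measurable]: "g \<in> borel_measurable borel"
    using borel_measurable_integrable[OF g(1)] by simp
  have [measurable]: "(\<lambda>y. indicator (ball x \<rho>) y / dist x y) \<in> borel_measurable borel"
    by (intro borel_measurable_divide borel_measurable_indicator borel_measurable_continuous_onI
        continuous_intros) auto
  have "ennreal (g y / dist x y)
      \<le> ennreal (g y / \<rho>) + ennreal M * ennreal (indicator (ball x \<rho>) y / dist x y)" for y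
  proof (cases "dist x y < \<rho>")
    case True
    then have "g y / dist x y \<le> M * (indicator (ball x \<rho>) y / dist x y)"
      using near[OF True] by (simp add: divide_right_mono)
    then have "ennreal (g y / dist x y) \<le> ennreal M * ennreal (indicator (ball x \<rho>) y / dist x y)"
      using M by (simp add: ennreal_leI flip: ennreal_mult)
    then show ?thesis by (rule add_increasing[OF zero_le])
  next
    case False
    then have "0 < dist x y * \<rho>"
      using \<rho> by (intro mult_pos_pos) auto
    then have "g y / dist x y \<le> g y / \<rho>"
      using False g(2)[of y] by (intro divide_left_mono) simp_all
    then show ?thesis by (intro add_increasing2[OF zero_le] ennreal_leI)
  qed
  then have "(\<integral>\<^sup>+y. ennreal (g y / dist x y) \<partial>lborel)
      \<le> (\<integral>\<^sup>+y. ennreal (g y / \<rho>) + ennreal M * ennreal (indicator (ball x \<rho>) y / dist x y) \<partial>lborel)"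
    by (intro nn_integral_mono)
  also have "\<dots> = (\<integral>\<^sup>+y. ennreal (g y / \<rho>) \<partial>lborel)
      + ennreal M * (\<integral>\<^sup>+y. ennreal (indicator (ball x \<rho>) y / dist x y) \<partial>lborel)"
    by (simp add: nn_integral_add nn_integral_cmult)
  also have "\<dots> \<le> ennreal (integral\<^sup>L lborel g / \<rho>) + ennreal M * ennreal (32 / 9 * pi * \<rho>\<^sup>2)"
    using g \<rho> by (intro add_mono mult_left_mono nn_integral_inverse_dist_ball_le)
      (simp_all add: nn_integral_eq_integral)
  also have "\<dots> = ennreal (integral\<^sup>L lborel g / \<rho> + M * (32 / 9 * pi * \<rho>\<^sup>2))"
    using g \<rho> M by (simp add: integral_nonneg ennreal_plus flip: ennreal_mult)
  finally show ?thesis .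
qed

lemma nn_integral_lborel_scaleR:
  fixes f :: "'a::euclidean_space \<Rightarrow> ennreal"
  assumes [measurable]: "f \<in> borel_measurable borel" and c: "c \<noteq> 0"
  shows "(\<integral>\<^sup>+x. f x \<partial>lborel) = ennreal (\<bar>c\<bar> ^ DIM('a)) * (\<integral>\<^sup>+x. f (c *\<^sub>R x) \<partial>lborel)"
  by (subst lborel_affine[OF c, of 0]) (simp add: nn_integral_density nn_integral_distr nn_integral_cmult)

lemma integrable_lborel_scaleR:
  fixes f :: "'a::euclidean_space \<Rightarrow> real"
  assumes f: "integrable lborel f" and c: "c \<noteq> 0"
  shows "integrable lborel (\<lambda>x. f (c *\<^sub>R x))"
proof -
  have [measurable]: "f \<in> borel_measurable borel"
    using f by auto
  have "(\<integral>\<^sup>+x. ennreal (norm (f x)) \<partial>lborel) < \<infinity>"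
    using f by (simp add: integrable_iff_bounded)
  then have "ennreal (\<bar>c\<bar> ^ DIM('a)) * (\<integral>\<^sup>+x. ennreal (norm (f (c *\<^sub>R x))) \<partial>lborel) < \<infinity>"
    using c by (subst (asm) nn_integral_lborel_scaleR[OF _ c]) auto
  then show ?thesis
    using c by (auto simp: integrable_iff_bounded ennreal_mult_less_top top_unique)
qed

lemma integral_lborel_scaleR:
  fixes f :: "'a::euclidean_space \<Rightarrow> real"
  assumes c: "c \<noteq> 0"
  shows "integral\<^sup>L lborel f = \<bar>c\<bar> ^ DIM('a) * integral\<^sup>L lborel (\<lambda>x. f (c *\<^sub>R x))"
proof cases
  assume f: "integrable lborel f"
  then have [measurable]: "f \<in> borel_measurable borel" by auto
  show ?thesis
    using c f integrable_lborel_scaleR[OF f c]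
    by (subst lborel_affine[OF c, of 0]) (simp add: integral_density integral_distr)
next
  assume nf: "\<not> integrable lborel f"
  then have "\<not> integrable lborel (\<lambda>x. f (c *\<^sub>R x))"
    using integrable_lborel_scaleR[of "\<lambda>x. f (c *\<^sub>R x)" "1 / c"] c by auto
  with nf show ?thesis by (simp add: not_integrable_integral_eq)
qed

section \<open>Annular bump functions\<close>

definition annulus_bump :: "R3 \<Rightarrow> real" where
  "annulus_bump x = expinv 0 (x \<bullet> x - 1) * expinv 0 (16 - x \<bullet> x)"

definition annulus_bump_at :: "real \<Rightarrow> R3 \<Rightarrow> real" where
  "annulus_bump_at r x = annulus_bump ((1 / r) *\<^sub>R x)"

definition off_annulus :: "real \<Rightarrow> R3 set" where
  "off_annulus r = {x. norm x < r} \<union> {x. 4 * r < norm x}"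

definition annular :: "real \<Rightarrow> (R3 \<Rightarrow> real) \<Rightarrow> bool" where
  "annular r f \<longleftrightarrow> f \<in> bump_algebra \<and> (\<forall>x \<in> off_annulus r. f x = 0)"

definition laplacian :: "(R3 \<Rightarrow> real) \<Rightarrow> R3 \<Rightarrow> real" where
  "laplacian f x = (\<Sum>i\<in>UNIV. dpart i (dpart i f) x)"

lemma annulus_bump_in_bump_algebra: "annulus_bump \<in> bump_algebra"
proof -
  have "(\<lambda>x. expinv 0 (-1 + 1 * (x \<bullet> x)) * expinv 0 (16 + (-1) * (x \<bullet> x))) \<in> bump_algebra"
    by (intro bump_algebra.intros)
  then show ?thesis
    by (simp add: annulus_bump_def[abs_def])
qed

lemma annulus_bump_at_nonneg: "0 \<le> annulus_bump_at r x"
  by (simp add: annulus_bump_at_def annulus_bump_def expinv_0_nonneg)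

lemma annulus_bump_at_eq:
  "0 < r \<Longrightarrow> annulus_bump_at r x = expinv 0 ((norm x / r)\<^sup>2 - 1) * expinv 0 (16 - (norm x / r)\<^sup>2)"
  by (simp add: annulus_bump_at_def annulus_bump_def dot_square_norm power_divide)

lemma open_off_annulus: "open (off_annulus r)"
  unfolding off_annulus_def by (intro open_Un open_Collect_less continuous_intros)

lemma off_annulus_if_notin_cball: "x \<notin> cball 0 (4 * r) \<Longrightarrow> x \<in> off_annulus r"
  by (simp add: off_annulus_def)

lemma annular_annulus_bump_at:
  assumes "0 < r"
  shows "annular r (annulus_bump_at r)"
  unfolding annular_def
proof
  show "annulus_bump_at r \<in> bump_algebra"
    unfolding annulus_bump_at_def[abs_def] by (intro bump_algebra_scaleR annulus_bump_in_bump_algebra)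
  show "\<forall>x \<in> off_annulus r. annulus_bump_at r x = 0"
  proof
    fix x assume "x \<in> off_annulus r"
    then have "norm x / r < 1 \<or> 4 < norm x / r"
      using assms by (auto simp: off_annulus_def field_simps)
    moreover have "0 \<le> norm x / r" using assms by simp
    ultimately have "(norm x / r)\<^sup>2 \<le> 1\<^sup>2 \<or> 4\<^sup>2 \<le> (norm x / r)\<^sup>2"
      by (metis less_imp_le power_mono zero_le_numeral)
    then show "annulus_bump_at r x = 0"
      using assms by (auto simp: annulus_bump_at_eq expinv_nonpos)
  qed
qed

lemma annular_dpart: "annular r f \<Longrightarrow> annular r (dpart i f)"
  unfolding annular_def using dpart_in_bump_algebra dpart_eq_0_open[OF open_off_annulus] by blast

lemma annular_laplacian: "annular r f \<Longrightarrow> annular r (laplacian f)"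
  using annular_dpart[of r "dpart _ f"] annular_dpart[of r f]
  unfolding annular_def laplacian_def[abs_def] by (auto intro: bump_algebra_sum)

lemma annular_test_fun: "annular r f \<Longrightarrow> test_fun f"
proof -
  assume f: "annular r f"
  then have "{x. f x \<noteq> 0} \<subseteq> cball 0 (4 * r)"
    using off_annulus_if_notin_cball unfolding annular_def by blast
  then have "compact (closure {x. f x \<noteq> 0})"
    using bounded_subset[OF bounded_cball] by (simp add: compact_closure)
  with f show ?thesis
    by (simp add: test_fun_def annular_def bump_algebra_smooth3)
qed

lemma laplacian_annulus_bump_at:
  assumes "0 < r"
  shows "laplacian (annulus_bump_at r) x = (1 / r)\<^sup>2 * laplacian annulus_bump ((1 / r) *\<^sub>R x)"
proof -
  have "dpart i (dpart i (annulus_bump_at r)) x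
      = (1 / r)\<^sup>2 * dpart i (dpart i annulus_bump) ((1 / r) *\<^sub>R x)" for i
  proof -
    define g where "g x = dpart i annulus_bump ((1 / r) *\<^sub>R x)" for x
    have g: "g \<in> bump_algebra"
      unfolding g_def[abs_def]
      by (intro bump_algebra_scaleR dpart_in_bump_algebra annulus_bump_in_bump_algebra)
    have "dpart i (annulus_bump_at r) = (\<lambda>x. 1 / r * g x)"
      unfolding annulus_bump_at_def[abs_def] g_def
      by (intro ext dpart_scaleR annulus_bump_in_bump_algebra)
    then have "dpart i (dpart i (annulus_bump_at r)) x = 1 / r * dpart i g x"
      by (simp only: dpart_cmult[OF g])
    also have "dpart i g x = 1 / r * dpart i (dpart i annulus_bump) ((1 / r) *\<^sub>R x)"
      unfolding g_def[abs_def] by (intro dpart_scaleR dpart_in_bump_algebra annulus_bump_in_bump_algebra)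
    finally show ?thesis by (simp add: power2_eq_square)
  qed
  then show ?thesis
    by (simp add: laplacian_def sum_distrib_left)
qed

lemma annular_bounded:
  assumes "annular r f"
  obtains M where "\<And>x. \<bar>f x\<bar> \<le> M"
proof (rule bounded_compact_support)
  show "continuous_on UNIV f"
    using assms bump_algebra_continuous by (auto simp: annular_def)
  show "x \<notin> cball 0 (4 * r) \<Longrightarrow> f x = 0" for x
    using assms off_annulus_if_notin_cball by (auto simp: annular_def)
qed (use that in auto)

lemma integrable_annular:
  assumes "annular r f"
  shows "integrable lborel f"
proof -
  have "integrable lborel (\<lambda>x. indicator (cball 0 (4 * r)) x *\<^sub>R f x)"
    using assms bump_algebra_continuous
    by (intro borel_integrable_compact) (auto simp: annular_def intro: continuous_on_subset)
  moreover have "(\<lambda>x. indicator (cball 0 (4 * r)) x *\<^sub>R f x) = f"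
    using assms off_annulus_if_notin_cball by (force simp: annular_def indicator_def)
  ultimately show ?thesis by simp
qed

lemma integrable_mult_annular:
  assumes "set_integrable lborel (cball 0 (4 * r)) h" "annular r f"
  shows "integrable lborel (\<lambda>x. h x * f x)"
proof -
  obtain M where "\<And>x. \<bar>f x\<bar> \<le> M"
    using annular_bounded[OF assms(2)] by blast
  then show ?thesis
    using assms off_annulus_if_notin_cball bump_algebra_measurable
    by (intro integrable_mult_compact_support) (auto simp: annular_def)
qed

definition lap_bump_norm :: real where
  "lap_bump_norm = (LINT x|lborel. \<bar>laplacian annulus_bump x\<bar>)"

definition bump_core :: real where
  "bump_core = (LINT x|lborel. annulus_bump x * indicator (cball 0 3) x)"

lemma lap_bump_norm_nonneg: "0 \<le> lap_bump_norm"
  by (simp add: lap_bump_norm_def)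

lemma integral_abs_laplacian_annulus_bump_at:
  assumes r: "0 < r"
  shows "(LINT x|lborel. \<bar>laplacian (annulus_bump_at r) x\<bar>) = r * lap_bump_norm"
proof -
  have "(LINT x|lborel. \<bar>laplacian annulus_bump ((1 / r) *\<^sub>R x)\<bar>) = r ^ 3 * lap_bump_norm"
    unfolding lap_bump_norm_def using r
    by (subst (2) integral_lborel_scaleR[of "1 / r"]) (simp_all add: field_simps power3_eq_cube)
  then show ?thesis
    using r by (simp add: laplacian_annulus_bump_at abs_mult power2_eq_square power3_eq_cube)
qed

lemma integral_annulus_bump_at_cball:
  assumes r: "0 < r"
  shows "(LINT x|lborel. annulus_bump_at r x * indicator (cball 0 (3 * r)) x) = r ^ 3 * bump_core"
proof -
  have "(\<lambda>y. annulus_bump_at r (r *\<^sub>R y) * indicator (cball 0 (3 * r)) (r *\<^sub>R y))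
      = (\<lambda>y::R3. annulus_bump y * indicator (cball 0 3) y)"
    using r by (intro ext) (simp add: annulus_bump_at_def indicator_def mem_cball_0)
  then show ?thesis
    using r by (subst integral_lborel_scaleR[of r]) (simp_all add: bump_core_def)
qed

lemma bump_core_pos: "0 < bump_core"
proof -
  define x0 :: R3 where "x0 = 2 *\<^sub>R axis 1 1"
  define c where "c = expinv 0 (5 / 4) * expinv 0 (39 / 4)"
  have c: "0 < c"
    by (simp add: c_def expinv_0_pos)
  have "c * indicator (ball x0 (1 / 2)) y \<le> annulus_bump y * indicator (cball 0 3) y" for y
  proof (cases "y \<in> ball x0 (1 / 2)")
    case True
    then have "norm (x0 - y) < 1 / 2" "norm x0 = 2"
      by (simp_all add: x0_def dist_norm)
    then have y: "3 / 2 < norm y" "norm y < 5 / 2"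
      using norm_triangle_ineq2[of x0 y] norm_triangle_ineq3[of x0 y] by auto
    then have "(3 / 2)\<^sup>2 < (norm y)\<^sup>2" "(norm y)\<^sup>2 < (5 / 2)\<^sup>2"
      by (intro power_strict_mono; simp)+
    then have "5 / 4 \<le> y \<bullet> y - 1" "39 / 4 \<le> 16 - y \<bullet> y"
      by (simp_all add: dot_square_norm power2_eq_square)
    then have "c \<le> annulus_bump y"
      unfolding c_def annulus_bump_def by (intro mult_mono expinv_0_mono expinv_0_nonneg) auto
    with True y show ?thesis by simp
  qed (simp add: annulus_bump_def expinv_0_nonneg)
  moreover have "integrable lborel (\<lambda>x. indicator (cball 0 3) x *\<^sub>R annulus_bump x)"
    using bump_algebra_continuous[OF annulus_bump_in_bump_algebra]
    by (intro borel_integrable_compact) (auto intro: continuous_on_subset)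
  ultimately have "(LINT y|lborel. c * indicator (ball x0 (1 / 2)) y) \<le> bump_core"
    unfolding bump_core_def
    by (intro integral_mono_AE') (simp_all add: annulus_bump_def expinv_0_nonneg ac_simps)
  moreover have "(LINT y|lborel. c * indicator (ball x0 (1 / 2)) y) = c * (4 / 3 * (1 / 2) ^ 3 * pi)"
    using emeasure_lborel_ball_finite[of x0 "1 / 2"] sphere_volume[of "1 / 2" x0] by simp
  moreover have "0 < c * (4 / 3 * (1 / 2) ^ 3 * pi)"
    using c by simp
  ultimately show ?thesis by linarith
qed

section \<open>Decay from a recurrence\<close>

lemma powr_recurrence_le:
  fixes b b' B L p :: real
  assumes p: "1 < p" and "0 < b'" "0 \<le> b" "0 < B" "0 \<le> L"
    and rec: "b' powr (p - 1) \<le> L * b" and "b \<le> B" and "L \<le> B powr (p - 2)"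
  shows "b' \<le> B"
proof -
  have "L * b \<le> B powr (p - 2) * B"
    using assms by (intro mult_mono) auto
  with rec have "b' powr (p - 1) \<le> B powr (p - 2) * B"
    by linarith
  also have "\<dots> = B powr (p - 1)"
    using powr_add[of B "p - 2" 1] \<open>0 < B\<close> by simp
  finally show ?thesis
    using p \<open>0 < b'\<close> \<open>0 < B\<close> by (meson not_le powr_less_mono2 diff_gt_0_iff_gt less_imp_le)
qed

lemma bounded_along_powers_of_3:
  fixes U :: "real \<Rightarrow> real"
  assumes p: "2 < p" and r1: "0 < r1" and K: "0 \<le> K"
    and pos: "\<And>s. 0 < s \<Longrightarrow> 0 < U s"
    and rec: "\<And>r. r1 \<le> r \<Longrightarrow> U (3 * r) powr (p - 1) \<le> K * U r / r\<^sup>2"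
  obtains B where "0 < B" "\<And>n::nat. U (3 ^ n * r1) * (3 ^ n * r1) powr (2 / (p - 2)) \<le> B"
proof -
  define \<alpha> where "\<alpha> = 2 / (p - 2)"
  have \<alpha>: "\<alpha> * (p - 1) = \<alpha> + 2"
    using p by (auto simp: \<alpha>_def field_simps)
  define L where "L = K * 3 powr (\<alpha> * (p - 1))"
  have L: "0 \<le> L"
    using K by (simp add: L_def)
  define B where "B = max (U r1 * r1 powr \<alpha>) (L powr (1 / (p - 2)))"
  have B: "0 < B"
    using pos[OF r1] r1 by (simp add: B_def max.strict_coboundedI1)
  have LB: "L \<le> B powr (p - 2)"
  proof -
    have "L = (L powr (1 / (p - 2))) powr (p - 2)"
      using L p by (cases "L = 0") (simp_all add: powr_powr)
    also have "\<dots> \<le> B powr (p - 2)"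
      using p L by (intro powr_mono2) (auto simp: B_def)
    finally show ?thesis .
  qed
  have "U (3 ^ n * r1) * (3 ^ n * r1) powr \<alpha> \<le> B" for n :: nat
  proof (induction n)
    case 0
    then show ?case by (simp add: B_def)
  next
    case (Suc n)
    define r where "r = 3 ^ n * r1"
    have r: "r1 \<le> r" "0 < r"
      using r1 by (auto simp: r_def)
    define b' where "b' = U (3 * r) * (3 * r) powr \<alpha>"
    have b': "0 < b'"
      using r pos[of "3 * r"] by (simp add: b'_def)
    have "b' powr (p - 1) = U (3 * r) powr (p - 1) * (3 * r) powr (\<alpha> * (p - 1))"
      using r pos[of "3 * r"] by (simp add: b'_def powr_mult powr_powr)
    also have "\<dots> \<le> K * U r / r\<^sup>2 * (3 * r) powr (\<alpha> * (p - 1))"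
      by (rule mult_right_mono[OF rec[OF r(1)]]) simp
    also have "(3 * r) powr (\<alpha> * (p - 1)) = 3 powr (\<alpha> * (p - 1)) * (r powr \<alpha> * r\<^sup>2)"
      using r by (simp add: powr_mult \<alpha> powr_add powr_numeral)
    also have "K * U r / r\<^sup>2 * (3 powr (\<alpha> * (p - 1)) * (r powr \<alpha> * r\<^sup>2)) = L * (U r * r powr \<alpha>)"
      using r by (simp add: L_def field_simps)
    finally have "b' \<le> B"
      using Suc p r pos[of r] b' B L LB
      by (intro powr_recurrence_le[of p b' "U r * r powr \<alpha>"]) (simp_all add: r_def)
    then show ?case
      by (simp add: b'_def r_def mult.assoc)
  qed
  with B that show ?thesis
    by (simp add: \<alpha>_def)
qed

lemma decay_from_recurrence:
  fixes U :: "real \<Rightarrow> real"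
  assumes p: "2 < p" and r1: "0 < r1" and K: "0 \<le> K"
    and pos: "\<And>s. 0 < s \<Longrightarrow> 0 < U s"
    and antimono: "\<And>s t. 0 < s \<Longrightarrow> s \<le> t \<Longrightarrow> U t \<le> U s"
    and rec: "\<And>r. r1 \<le> r \<Longrightarrow> U (3 * r) powr (p - 1) \<le> K * U r / r\<^sup>2"
  shows "\<exists>C>0. \<forall>s>r1. U s \<le> C / s powr (2 / (p - 2))"
proof -
  define \<alpha> where "\<alpha> = 2 / (p - 2)"
  have \<alpha>: "0 < \<alpha>"
    using p by (simp add: \<alpha>_def)
  obtain B where B: "0 < B" "\<And>n::nat. U (3 ^ n * r1) * (3 ^ n * r1) powr \<alpha> \<le> B"
    using bounded_along_powers_of_3[OF p r1 K pos rec] unfolding \<alpha>_def by blast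
  show ?thesis
  proof (intro exI[of _ "B * 3 powr \<alpha>"] conjI allI impI)
    show "0 < B * 3 powr \<alpha>"
      using B by simp
    fix s assume s: "r1 < s"
    obtain n :: nat where "3 ^ n \<le> s / r1" "s / r1 < 3 ^ (n + 1)"
      using ex_power_bracket[of 3 "s / r1"] s r1 by auto
    then have n: "3 ^ n * r1 \<le> s" "s < 3 ^ (n + 1) * r1"
      using r1 by (auto simp: field_simps)
    have "U s \<le> U (3 ^ n * r1)"
      using antimono n(1) r1 by simp
    also have "\<dots> \<le> B / (3 ^ n * r1) powr \<alpha>"
      using B(2)[of n] r1 by (simp add: pos_le_divide_eq)
    also have "\<dots> = B * 3 powr \<alpha> / (3 ^ (n + 1) * r1) powr \<alpha>"
      using r1 by (simp add: powr_mult powr_realpow[symmetric] powr_add field_simps)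
    also have "\<dots> \<le> B * 3 powr \<alpha> / s powr \<alpha>"
      using B n s r1 \<alpha> by (intro divide_left_mono powr_mono2 mult_pos_pos) auto
    finally show "U s \<le> B * 3 powr \<alpha> / s powr (2 / (p - 2))"
      by (simp add: \<alpha>_def)
  qed
qed

section \<open>Radial solutions\<close>

locale radial_solution =
  fixes p :: real and u :: "R3 \<Rightarrow> real" and G :: "R3 \<Rightarrow> R3"
  assumes p: "2 < p"
    and Lp: "in_Lp p u"
    and radial: "\<And>x y. norm x = norm y \<Longrightarrow> u x = u y"
    and positive: "\<And>x. x \<noteq> 0 \<Longrightarrow> u x > 0"
    and decreasing: "\<And>x y. x \<noteq> 0 \<Longrightarrow> norm x \<le> norm y \<Longrightarrow> u y \<le> u x"
    and gradient: "weak_gradient u G"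
    and equation: "\<And>\<phi>. test_fun \<phi> \<Longrightarrow>
          integrable lborel (\<lambda>x. riesz (\<lambda>y. u y powr p) x * u x powr (p - 1) * \<phi> x) \<and>
          (LINT x|lborel. (\<Sum>i\<in>UNIV. G x $ i * dpart i \<phi> x) + u x powr (p - 1) * \<phi> x)
          = (LINT x|lborel. riesz (\<lambda>y. u y powr p) x * u x powr (p - 1) * \<phi> x)"
begin

definition profile :: "real \<Rightarrow> real" where
  "profile s = u (s *\<^sub>R axis 1 1)"

definition mass :: real where
  "mass = (LINT x|lborel. \<bar>u x\<bar> powr p)"

definition potential :: "R3 \<Rightarrow> real" where
  "potential = riesz (\<lambda>y. u y powr p)"

lemma u_measurable [measurable]: "u \<in> borel_measurable borel"
  using Lp by (simp add: in_Lp_def)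

lemma integrable_abs_powr: "integrable lborel (\<lambda>x. \<bar>u x\<bar> powr p)"
  using Lp by (simp add: in_Lp_def)

lemma mass_nonneg: "0 \<le> mass"
  by (simp add: mass_def)

lemma u_eq_profile: "u x = profile (norm x)"
  unfolding profile_def by (rule radial) simp

lemma profile_pos: "0 < s \<Longrightarrow> 0 < profile s"
  unfolding profile_def by (rule positive) simp

lemma profile_antimono: "0 < s \<Longrightarrow> s \<le> t \<Longrightarrow> profile t \<le> profile s"
  unfolding profile_def by (rule decreasing) auto

lemma u_le_profile: "0 < s \<Longrightarrow> s \<le> norm x \<Longrightarrow> u x \<le> profile s"
  using profile_antimono u_eq_profile by auto

lemma profile_le_u: "x \<noteq> 0 \<Longrightarrow> norm x \<le> s \<Longrightarrow> profile s \<le> u x"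
  using profile_antimono u_eq_profile by auto

lemma profile_powr_mult_ball_le_mass:
  assumes s: "0 < s"
  shows "profile s powr p * (4 / 3 * s ^ 3 * pi) \<le> mass"
proof -
  have "(LINT x|lborel. indicator (ball (0::R3) s) x * profile s powr p) \<le> mass"
    unfolding mass_def
  proof (rule integral_mono_AE)
    show "integrable lborel (\<lambda>x::R3. indicator (ball 0 s) x * profile s powr p)"
      using emeasure_lborel_ball_finite[of "0::R3" s]
      by (intro integrable_mult_left) (simp add: integrable_indicator_iff)
    show "AE x in lborel. indicator (ball 0 s) x * profile s powr p \<le> \<bar>u x\<bar> powr p"
      using AE_lborel_singleton[of "0::R3"]
    proof eventually_elim
      case (elim x)
      show ?case
      proof (cases "x \<in> ball 0 s")
        case True
        then have "profile s \<le> u x"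
          using elim by (intro profile_le_u) auto
        then show ?thesis
          using True p profile_pos[OF s] by (auto intro!: powr_mono2)
      qed simp
    qed
  qed (rule integrable_abs_powr)
  moreover have "measure lborel (ball (0::R3) s) = 4 / 3 * s ^ 3 * pi"
    using sphere_volume[of s "0::R3"] s by simp
  ultimately show ?thesis
    using emeasure_lborel_ball_finite[of "0::R3" s] by (simp add: mult.commute)
qed

lemma potential_le:
  assumes x: "x \<noteq> 0"
  shows "potential x \<le> 11 * mass / (6 * pi * norm x)"
proof -
  define \<rho> where "\<rho> = norm x / 2"
  have \<rho>: "0 < \<rho>"
    using x by (simp add: \<rho>_def)
  have near: "\<bar>u y\<bar> powr p \<le> profile \<rho> powr p" if "dist x y < \<rho>" for y
  proof -
    have "\<rho> \<le> norm y"
      using that norm_triangle_ineq2[of x y] by (simp add: \<rho>_def dist_norm)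
    then have "0 < u y" "u y \<le> profile \<rho>"
      using \<rho> by (auto intro: positive u_le_profile)
    then show ?thesis
      using p by (auto intro: powr_mono2)
  qed
  have "(\<integral>\<^sup>+y. ennreal (u y powr p / dist x y) \<partial>lborel) = (\<integral>\<^sup>+y. ennreal (\<bar>u y\<bar> powr p / dist x y) \<partial>lborel)"
    using AE_lborel_singleton[of "0::R3"]
    by (intro nn_integral_cong_AE) (auto elim!: eventually_mono dest!: positive)
  also have "\<dots> \<le> ennreal (mass / \<rho> + profile \<rho> powr p * (32 / 9 * pi * \<rho>\<^sup>2))"
    unfolding mass_def using integrable_abs_powr \<rho> near by (intro nn_integral_div_dist_le) auto
  finally have "(LINT y|lborel. u y powr p / dist x y) \<le> mass / \<rho> + profile \<rho> powr p * (32 / 9 * pi * \<rho>\<^sup>2)"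
    using mass_nonneg \<rho> by (intro integral_real_bounded) auto
  also have "profile \<rho> powr p * (32 / 9 * pi * \<rho>\<^sup>2) \<le> 8 / 3 * mass / \<rho>"
  proof -
    have "profile \<rho> powr p * (4 / 3 * \<rho> ^ 3 * pi) * (8 / 3 / \<rho> ^ 3) \<le> mass * (8 / 3 / \<rho> ^ 3)"
      using profile_powr_mult_ball_le_mass[OF \<rho>] \<rho> by (intro mult_right_mono) auto
    then show ?thesis
      using \<rho> by (simp add: field_simps power2_eq_square power3_eq_cube)
  qed
  finally have "(LINT y|lborel. u y powr p / dist x y) \<le> 22 / 3 * mass / norm x"
    by (simp add: \<rho>_def field_simps)
  then show ?thesis
    by (simp add: potential_def riesz_def field_simps)
qed

lemma ex_potential_le_half: "\<exists>r1>0. \<forall>x. r1 \<le> norm x \<longrightarrow> potential x \<le> 1 / 2"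
proof (intro exI[of _ "11 * mass / (3 * pi) + 1"] conjI allI impI)
  show "0 < 11 * mass / (3 * pi) + 1"
    using mass_nonneg by (simp add: add_nonneg_pos)
  fix x :: R3
  assume x: "11 * mass / (3 * pi) + 1 \<le> norm x"
  moreover have "0 \<le> 11 * mass / (3 * pi)"
    using mass_nonneg by simp
  ultimately have "0 < norm x" "11 * mass / (3 * pi) \<le> norm x"
    by linarith+
  then have "0 < norm x" "11 * mass \<le> 3 * pi * norm x"
    by (simp_all add: divide_le_eq mult.commute)
  then have "11 * mass / (6 * pi * norm x) \<le> 1 / 2"
    by (simp add: field_simps)
  moreover have "potential x \<le> 11 * mass / (6 * pi * norm x)"
    using \<open>0 < norm x\<close> by (intro potential_le) auto
  ultimately show "potential x \<le> 1 / 2"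
    by linarith
qed

lemma set_integrable_u: "compact K \<Longrightarrow> set_integrable lborel K u"
  using gradient by (simp add: weak_gradient_def)

lemma set_integrable_gradient: "compact K \<Longrightarrow> set_integrable lborel K (\<lambda>x. G x $ i)"
  using gradient by (simp add: weak_gradient_def)

lemma integrable_powr_mult_annular:
  assumes r: "0 < r" and f: "annular r f"
  shows "integrable lborel (\<lambda>x. u x powr (p - 1) * f x)"
proof -
  obtain M where M: "\<And>x. \<bar>f x\<bar> \<le> M"
    using annular_bounded[OF f] by blast
  have "\<bar>u x powr (p - 1) * f x\<bar> \<le> profile r powr (p - 1) * M" for x
  proof (cases "x \<in> off_annulus r")
    case True
    then show ?thesis
      using f M[of x] by (auto simp: annular_def)
  next
    case False
    then have "0 < u x" "u x \<le> profile r"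
      using r by (auto simp: off_annulus_def intro: positive u_le_profile)
    then have "u x powr (p - 1) \<le> profile r powr (p - 1)"
      using p by (intro powr_mono2) auto
    then show ?thesis
      using M[of x] by (simp add: abs_mult mult_mono)
  qed
  then show ?thesis
    using f off_annulus_if_notin_cball bump_algebra_measurable
    by (intro integrable_bounded_compact_support[where K="cball 0 (4 * r)"])
      (auto simp: annular_def)
qed

lemma integral_mult_laplacian_annular:
  assumes f: "annular r f"
  shows "(LINT x|lborel. u x * laplacian f x) = - (\<Sum>i\<in>UNIV. LINT x|lborel. G x $ i * dpart i f x)"
proof -
  have ddf: "annular r (dpart i (dpart i f))" for i
    using f by (intro annular_dpart)
  have "(LINT x|lborel. u x * laplacian f x) = (\<Sum>i\<in>UNIV. LINT x|lborel. u x * dpart i (dpart i f) x)"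
    unfolding laplacian_def sum_distrib_left
    using ddf set_integrable_u
    by (intro Bochner_Integration.integral_sum integrable_mult_annular) auto
  also have "\<dots> = (\<Sum>i\<in>UNIV. - (LINT x|lborel. G x $ i * dpart i f x))"
    using gradient annular_test_fun[OF annular_dpart[OF f]] by (simp add: weak_gradient_def)
  finally show ?thesis
    by (simp add: sum_negf)
qed

lemma weak_equation_annular:
  assumes r: "0 < r" and f: "annular r f"
  shows "integrable lborel (\<lambda>x. potential x * u x powr (p - 1) * f x)"
    and "- (LINT x|lborel. u x * laplacian f x) + (LINT x|lborel. u x powr (p - 1) * f x)
      = (LINT x|lborel. potential x * u x powr (p - 1) * f x)"
proof -
  note eq = equation[OF annular_test_fun[OF f], folded potential_def]
  then show "integrable lborel (\<lambda>x. potential x * u x powr (p - 1) * f x)"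
    by blast
  have G: "integrable lborel (\<lambda>x. G x $ i * dpart i f x)" for i
    using f set_integrable_gradient by (intro integrable_mult_annular annular_dpart) auto
  have "(LINT x|lborel. (\<Sum>i\<in>UNIV. G x $ i * dpart i f x) + u x powr (p - 1) * f x)
      = (\<Sum>i\<in>UNIV. LINT x|lborel. G x $ i * dpart i f x) + (LINT x|lborel. u x powr (p - 1) * f x)"
    using G integrable_powr_mult_annular[OF r f] by (simp add: Bochner_Integration.integral_sum)
  with eq integral_mult_laplacian_annular[OF f]
  show "- (LINT x|lborel. u x * laplacian f x) + (LINT x|lborel. u x powr (p - 1) * f x)
      = (LINT x|lborel. potential x * u x powr (p - 1) * f x)"
    by simp
qed

lemma half_integral_le_laplacian:
  assumes r: "0 < r" and small: "\<And>x. r \<le> norm x \<Longrightarrow> potential x \<le> 1 / 2"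
  shows "1 / 2 * (LINT x|lborel. u x powr (p - 1) * annulus_bump_at r x)
    \<le> (LINT x|lborel. u x * laplacian (annulus_bump_at r) x)"
proof -
  note \<phi> = annular_annulus_bump_at[OF r]
  have "(LINT x|lborel. potential x * u x powr (p - 1) * annulus_bump_at r x)
      \<le> (LINT x|lborel. 1 / 2 * (u x powr (p - 1) * annulus_bump_at r x))"
  proof (rule integral_mono)
    show "integrable lborel (\<lambda>x. potential x * u x powr (p - 1) * annulus_bump_at r x)"
      by (rule weak_equation_annular(1)[OF r \<phi>])
    show "integrable lborel (\<lambda>x. 1 / 2 * (u x powr (p - 1) * annulus_bump_at r x))"
      using integrable_powr_mult_annular[OF r \<phi>] by simp
    fix x
    show "potential x * u x powr (p - 1) * annulus_bump_at r x
        \<le> 1 / 2 * (u x powr (p - 1) * annulus_bump_at r x)"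
    proof (cases "x \<in> off_annulus r")
      case True
      then show ?thesis
        using \<phi> by (simp add: annular_def)
    next
      case False
      then have "potential x \<le> 1 / 2"
        by (intro small) (simp add: off_annulus_def)
      moreover have "0 \<le> u x powr (p - 1) * annulus_bump_at r x"
        by (simp add: annulus_bump_at_nonneg)
      ultimately show ?thesis
        by (metis mult.assoc mult_right_mono)
    qed
  qed
  then show ?thesis
    using weak_equation_annular(2)[OF r \<phi>] by simp
qed

lemma profile_powr_le_integral:
  assumes r: "0 < r"
  shows "profile (3 * r) powr (p - 1) * (r ^ 3 * bump_core)
    \<le> (LINT x|lborel. u x powr (p - 1) * annulus_bump_at r x)"
proof -
  have "(LINT x|lborel. profile (3 * r) powr (p - 1) * (annulus_bump_at r x * indicator (cball 0 (3 * r)) x))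
      \<le> (LINT x|lborel. u x powr (p - 1) * annulus_bump_at r x)"
  proof (rule integral_mono_AE')
    show "integrable lborel (\<lambda>x. u x powr (p - 1) * annulus_bump_at r x)"
      by (rule integrable_powr_mult_annular[OF r annular_annulus_bump_at[OF r]])
    show "AE x in lborel. 0 \<le> u x powr (p - 1) * annulus_bump_at r x"
      by (simp add: annulus_bump_at_nonneg)
    have "profile (3 * r) powr (p - 1) * (annulus_bump_at r x * indicator (cball 0 (3 * r)) x)
        \<le> u x powr (p - 1) * annulus_bump_at r x" for x
    proof (cases "x \<in> cball 0 (3 * r) \<and> x \<notin> off_annulus r")
      case True
      then have "x \<noteq> 0" "norm x \<le> 3 * r"
        using r by (auto simp: off_annulus_def)
      then have "profile (3 * r) \<le> u x"
        by (rule profile_le_u)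
      then have "profile (3 * r) powr (p - 1) \<le> u x powr (p - 1)"
        using profile_pos[of "3 * r"] r p by (intro powr_mono2) auto
      then show ?thesis
        using True by (simp add: mult_right_mono annulus_bump_at_nonneg)
    next
      case False
      then show ?thesis
        using annular_annulus_bump_at[OF r] by (auto simp: annular_def annulus_bump_at_nonneg)
    qed
    then show "AE x in lborel. profile (3 * r) powr (p - 1) * (annulus_bump_at r x * indicator (cball 0 (3 * r)) x)
        \<le> u x powr (p - 1) * annulus_bump_at r x"
      by simp
  qed
  then show ?thesis
    using integral_annulus_bump_at_cball[OF r] by simp
qed

lemma integral_laplacian_le:
  assumes r: "0 < r"
  shows "(LINT x|lborel. u x * laplacian (annulus_bump_at r) x) \<le> profile r * (r * lap_bump_norm)"
proof -
  note \<Delta>\<phi> = annular_laplacian[OF annular_annulus_bump_at[OF r]]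
  have "(LINT x|lborel. u x * laplacian (annulus_bump_at r) x)
      \<le> (LINT x|lborel. profile r * \<bar>laplacian (annulus_bump_at r) x\<bar>)"
  proof (rule integral_mono)
    show "integrable lborel (\<lambda>x. u x * laplacian (annulus_bump_at r) x)"
      using set_integrable_u \<Delta>\<phi> by (intro integrable_mult_annular) auto
    show "integrable lborel (\<lambda>x. profile r * \<bar>laplacian (annulus_bump_at r) x\<bar>)"
      using integrable_annular[OF \<Delta>\<phi>] by simp
    fix x
    show "u x * laplacian (annulus_bump_at r) x \<le> profile r * \<bar>laplacian (annulus_bump_at r) x\<bar>"
    proof (cases "x \<in> off_annulus r")
      case True
      then show ?thesis
        using \<Delta>\<phi> by (simp add: annular_def)
    next
      case False
      then have "0 < u x" "u x \<le> profile r"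
        using r by (auto simp: off_annulus_def intro: positive u_le_profile)
      then have "u x * laplacian (annulus_bump_at r) x \<le> u x * \<bar>laplacian (annulus_bump_at r) x\<bar>"
        by (intro mult_left_mono) auto
      also have "\<dots> \<le> profile r * \<bar>laplacian (annulus_bump_at r) x\<bar>"
        using \<open>u x \<le> profile r\<close> by (intro mult_right_mono) auto
      finally show ?thesis .
    qed
  qed
  then show ?thesis
    using integral_abs_laplacian_annulus_bump_at[OF r] by simp
qed

lemma profile_recurrence:
  assumes r: "0 < r" and small: "\<And>x. r \<le> norm x \<Longrightarrow> potential x \<le> 1 / 2"
  shows "profile (3 * r) powr (p - 1) \<le> 2 * lap_bump_norm / bump_core * profile r / r\<^sup>2"
proof -
  define A where "A = profile (3 * r) powr (p - 1)"
  have "1 / 2 * (A * (r ^ 3 * bump_core)) \<le> profile r * (r * lap_bump_norm)"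
    using profile_powr_le_integral[OF r] half_integral_le_laplacian[OF r small]
      integral_laplacian_le[OF r]
    unfolding A_def by linarith
  then have "r * (A * bump_core * r\<^sup>2) \<le> r * (2 * lap_bump_norm * profile r)"
    by (simp add: power2_eq_square power3_eq_cube field_simps)
  then have "A * bump_core * r\<^sup>2 \<le> 2 * lap_bump_norm * profile r"
    using r by simp
  then show ?thesis
    using r bump_core_pos by (simp add: A_def field_simps)
qed

end

theorem lemma2p2:
  fixes p :: real and u :: "R3 \<Rightarrow> real"
  assumes "2 < p" and "p < 5"
    and "in_dotH1 u" and "in_Lp p u"
    and radial: "\<And>x y. norm x = norm y \<Longrightarrow> u x = u y"
    and positive: "\<And>x. x \<noteq> 0 \<Longrightarrow> u x > 0"
    and decreasing: "\<And>x y. x \<noteq> 0 \<Longrightarrow> norm x \<le> norm y \<Longrightarrow> u y \<le> u x"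
    and "weak_solution p u"
  shows "\<exists>r0 > 0. \<exists>C > 0. \<forall>x. norm x > r0 \<longrightarrow> u x \<le> C / norm x powr (2 / (p - 2))"
proof -
  from \<open>weak_solution p u\<close> obtain G where G: "weak_gradient u G"
    and eq: "\<And>\<phi>. test_fun \<phi> \<Longrightarrow>
          integrable lborel (\<lambda>x. riesz (\<lambda>y. u y powr p) x * u x powr (p - 1) * \<phi> x) \<and>
          (LINT x|lborel. (\<Sum>i\<in>UNIV. G x $ i * dpart i \<phi> x) + u x powr (p - 1) * \<phi> x)
          = (LINT x|lborel. riesz (\<lambda>y. u y powr p) x * u x powr (p - 1) * \<phi> x)"
    unfolding weak_solution_def by blast
  interpret radial_solution p u G
    by (rule radial_solution.intro) (fact assms G eq)+
  obtain r1 where r1: "0 < r1" "\<And>x. r1 \<le> norm x \<Longrightarrow> potential x \<le> 1 / 2"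
    using ex_potential_le_half by blast
  have "\<exists>C>0. \<forall>s>r1. profile s \<le> C / s powr (2 / (p - 2))"
    using p r1 profile_pos profile_antimono lap_bump_norm_nonneg bump_core_pos
    by (intro decay_from_recurrence[where K="2 * lap_bump_norm / bump_core"] profile_recurrence)
      auto
  then show ?thesis
    using r1(1) u_eq_profile by auto
qed

end
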